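(* Let $d\ge 3$ and let $\rho$ be a full-rank density matrix on $\mathbb{C}^D$ depending on parameters $\theta_1,\dots,\theta_d$; write $\rho_0=\rho$ and $\rho_j=\partial_j\rho$ ($j=1,\dots,d$). Let $S$ be the $d\times d$ matrix with $S_{j,j}=1$ for all $j$, $S_{j,j+1}=i$ for $j=1,\dots,d-1$, $S_{d,1}=i$ if $d$ is not a multiple of $4$ and $S_{d,1}=-i$ if $d$ is a multiple of $4$, and all other entries $0$; let $T=S^{-1}$. For real numbers $\mathbf z=(z_{l,k})_{0\le l\le d,\,1\le k\le d}\in\mathbb R^{d(d+1)}$ and Hermitian $D\times D$ matrices $\xi_1,\dots,\xi_d$ define $$\Gamma_j=\sum_{k=1}^d T_{k,j}\Big(\sum_{l=0}^d z_{l,k}\rho_l+i\xi_k\Big),\qquad j=1,\dots,d.$$ For a binary string $\boldsymbol\alpha\in\{0,1\}^d$ let $\bar{\boldsymbol\alpha}=\boldsymbol\alpha$ if $d$ is not a multiple of $4$, and let $\bar{\boldsymbol\alpha}$ be $\boldsymbol\alpha$ with its last bit flipped if $d$ is a multiple of $4$, and define $$g_{\boldsymbol\alpha}=-\sum_{j=1}^d z_{j,j}-\sum_{j=1}^d\frac{\delta_{0,\bar\alpha_j}\mathrm{Tr}[\Gamma_j\rho^{-1}\Gamma_j^\dagger]+\delta_{1,\bar\alpha_j}\mathrm{Tr}[\Gamma_j^\dagger\rho^{-1}\Gamma_j]}{2}.$$ Then $$C_{\mathsf H}\ \ge\ \max_{\boldsymbol\alpha\in\{0,1\}^d}\ \max_{\mathbf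 z,\xi_1,\dots,\xi_d} g_{\boldsymbol\alpha}.$$
   Context: $\mathrm{Re}(\cdot)$ and $\mathrm{Im}(\cdot)$ of a matrix are taken entrywise, and $\|\cdot\|_1$ is the trace norm. For a $d$-parameter family of density matrices $\rho$ on $\mathbb{C}^D$, the Holevo Cramér–Rao bound with identity weight matrix is $$C_{\mathsf H}=\min\Big\{\mathrm{Tr}[\mathrm{Re}Z(\mathbf X)]+\|\mathrm{Im}Z(\mathbf X)\|_1\Big\},$$ the minimum taken over tuples $\mathbf X=(X_1,\dots,X_d)$ of Hermitian $D\times D$ matrices with $\mathrm{Tr}[\rho X_j]=0$ and $\mathrm{Tr}[\partial_j\rho\,X_k]=\delta_{jk}$, where $Z_{jk}(\mathbf X)=\mathrm{Tr}[\rho X_jX_k]$. The matrix $S$ is invertible (so $T$ exists). *)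

theory Defs
  imports Complex_Main "Jordan_Normal_Form.Schur_Decomposition"
    "HOL-Library.Extended_Real"
begin

definition mtrace :: "complex mat \<Rightarrow> complex" where
  "mtrace A = (\<Sum>i<dim_row A. A $$ (i, i))"

definition hermitian_mat :: "nat \<Rightarrow> complex mat \<Rightarrow> bool" where
  "hermitian_mat n A \<longleftrightarrow> A \<in> carrier_mat n n \<and> mat_adjoint A = A"

definition psd_mat :: "nat \<Rightarrow> complex mat \<Rightarrow> bool" where
  "psd_mat n A \<longleftrightarrow> hermitian_mat n A \<and>
     (\<forall>v \<in> carrier_vec n. 0 \<le> Re (conjugate v \<bullet> (A *\<^sub>v v)))"

definition density_mat :: "nat \<Rightarrow> complex mat \<Rightarrow> bool" where
  "density_mat n A \<longleftrightarrow> psd_mat n A \<and> mtrace A = 1"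

definition minv :: "complex mat \<Rightarrow> complex mat" where
  "minv A = (SOME B. B \<in> carrier_mat (dim_row A) (dim_row A) \<and>
              A * B = 1\<^sub>m (dim_row A) \<and> B * A = 1\<^sub>m (dim_row A))"

text \<open>Trace norm = sum of the singular values, i.e. of the square roots of the
  eigenvalues (with multiplicity) of A^dagger A.\<close>
definition trace_norm :: "complex mat \<Rightarrow> real" where
  "trace_norm A = (SOME s. \<exists>es. char_poly (mat_adjoint A * A) = (\<Prod>e\<leftarrow>es. [:- e, 1:])
                            \<and> s = sum_list (map (\<lambda>e. sqrt (Re e)) es))"

definition Re_mat :: "complex mat \<Rightarrow> complex mat" where
  "Re_mat A = map_mat (\<lambda>x. complex_of_real (Re x)) A"
definition Im_mat :: "complex mat \<Rightarrow> complex mat" where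
  "Im_mat A = map_mat (\<lambda>x. complex_of_real (Im x)) A"

text \<open>Parameters and estimator indices are 1-based (1..d); JNF matrix entries are
  0-based, so entry (j,k) of a d x d matrix is stored at (j-1,k-1).
  rho0 = rho, drho j = partial_j rho.\<close>

definition holevo_feasible ::
  "nat \<Rightarrow> nat \<Rightarrow> complex mat \<Rightarrow> (nat \<Rightarrow> complex mat) \<Rightarrow> (nat \<Rightarrow> complex mat) \<Rightarrow> bool" where
  "holevo_feasible D d rho0 drho X \<longleftrightarrow>
     (\<forall>j\<in>{1..d}. hermitian_mat D (X j) \<and> mtrace (rho0 * X j) = 0 \<and>
        (\<forall>k\<in>{1..d}. mtrace (drho j * X k) = (if j = k then 1 else 0)))"

definition Z_mat :: "nat \<Rightarrow> complex mat \<Rightarrow> (nat \<Rightarrow> complex mat) \<Rightarrow> complex mat" where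
  "Z_mat d rho0 X = mat d d (\<lambda>(a, b). mtrace (rho0 * X (a + 1) * X (b + 1)))"

definition holevo_objective :: "nat \<Rightarrow> complex mat \<Rightarrow> (nat \<Rightarrow> complex mat) \<Rightarrow> real" where
  "holevo_objective d rho0 X =
     Re (mtrace (Re_mat (Z_mat d rho0 X))) + trace_norm (Im_mat (Z_mat d rho0 X))"

text \<open>Holevo Cramer-Rao bound with identity weight (infimum, in the extended reals).\<close>
definition holevo_CR ::
  "nat \<Rightarrow> nat \<Rightarrow> complex mat \<Rightarrow> (nat \<Rightarrow> complex mat) \<Rightarrow> ereal" where
  "holevo_CR D d rho0 drho =
     (INF X \<in> {X. holevo_feasible D d rho0 drho X}. ereal (holevo_objective d rho0 X))"

definition S_mat :: "nat \<Rightarrow> complex mat" where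
  "S_mat d = mat d d (\<lambda>(a, b).
      if a = b then 1
      else if b = a + 1 then \<i>
      else if a = d - 1 \<and> b = 0 then (if 4 dvd d then - \<i> else \<i>)
      else 0)"

definition T_mat :: "nat \<Rightarrow> complex mat" where
  "T_mat d = minv (S_mat d)"

definition rho_l :: "complex mat \<Rightarrow> (nat \<Rightarrow> complex mat) \<Rightarrow> nat \<Rightarrow> complex mat" where
  "rho_l rho0 drho l = (if l = 0 then rho0 else drho l)"

definition Gamma ::
  "nat \<Rightarrow> nat \<Rightarrow> complex mat \<Rightarrow> (nat \<Rightarrow> complex mat) \<Rightarrow> (nat \<Rightarrow> nat \<Rightarrow> real)
     \<Rightarrow> (nat \<Rightarrow> complex mat) \<Rightarrow> nat \<Rightarrow> complex mat" where
  "Gamma D d rho0 drho z xi j = mat D D (\<lambda>(a, b).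
     \<Sum>k\<in>{1..d}. T_mat d $$ (k - 1, j - 1) *
        ((\<Sum>l\<in>{0..d}. complex_of_real (z l k) * rho_l rho0 drho l $$ (a, b))
         + \<i> * xi k $$ (a, b)))"

text \<open>Binary strings alpha in {0,1}^d as nat => bool (True = 1), used on 1..d.\<close>
definition alpha_bar :: "nat \<Rightarrow> (nat \<Rightarrow> bool) \<Rightarrow> nat \<Rightarrow> bool" where
  "alpha_bar d \<alpha> j = (if 4 dvd d \<and> j = d then \<not> \<alpha> j else \<alpha> j)"

definition g_alpha ::
  "nat \<Rightarrow> nat \<Rightarrow> complex mat \<Rightarrow> (nat \<Rightarrow> complex mat) \<Rightarrow> (nat \<Rightarrow> bool)
     \<Rightarrow> (nat \<Rightarrow> nat \<Rightarrow> real) \<Rightarrow> (nat \<Rightarrow> complex mat) \<Rightarrow> real" where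
  "g_alpha D d rho0 drho \<alpha> z xi =
     - (\<Sum>j\<in>{1..d}. z j j)
     - (\<Sum>j\<in>{1..d}.
          (let G = Gamma D d rho0 drho z xi j in
           (if \<not> alpha_bar d \<alpha> j
            then Re (mtrace (G * minv rho0 * mat_adjoint G))
            else Re (mtrace (mat_adjoint G * minv rho0 * G)))) / 2)"

end

theory Submission
  imports Defs "HOL-Analysis.L2_Norm" "Berlekamp_Zassenhaus.Mahler_Measure"
begin

(* Fix a feasible X and write j' for the cyclic successor of j, so that row j of S is
   e_j + s_j e_j' with s_j = +-i.  Put W_j = X_j + cnj(s_j) X_j'.  For every matrix Gamma,
   positivity of rho gives 0 <= tr[C rho C^dagger] for C = W_j + Gamma rho^-1 (or for the
   adjoints, as alpha_bar prescribes), which bounds -tr[Gamma rho^-1 Gamma^dagger] - 2 Re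
   tr[Gamma W_j^dagger] from above by tr[W_j rho W_j^dagger].  With Gamma = Gamma_j the linear
   terms sum to 2 sum_j z_jj: T = S^-1 undoes the combinations X_j + s_j X_j', the constraints
   give tr[rho_l X_m] = delta_lm, and tr[xi_k X_m] is real.  The quadratic terms sum to
   2 (tr Re Z + sum_j tau_j Im Z_jj') with signs tau_j = +-1, and the last sum is
   Re tr[(Im Z) U] for a signed cyclic permutation matrix U; as U is unitary, it is at most
   the trace norm of Im Z. *)

subsection \<open>Adjoints and traces\<close>

lemma mat_adjoint_dim [simp]:
  "dim_row (mat_adjoint A) = dim_col A" "dim_col (mat_adjoint A) = dim_row A"
  unfolding mat_adjoint_def by auto

lemma index_mat_adjoint [simp]:
  "i < dim_col A \<Longrightarrow> j < dim_row A \<Longrightarrow> mat_adjoint A $$ (i, j) = cnj (A $$ (j, i))"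
  unfolding mat_adjoint_def by (simp add: mat_of_rows_def)

lemma mat_adjoint_carrier: "A \<in> carrier_mat n m \<Longrightarrow> mat_adjoint A \<in> carrier_mat m n"
  unfolding carrier_mat_def by simp

lemma mat_adjoint_adjoint [simp]: "mat_adjoint (mat_adjoint (A :: complex mat)) = A"
  by (rule eq_matI) auto

lemma mat_adjoint_add:
  "(A :: complex mat) \<in> carrier_mat n m \<Longrightarrow> B \<in> carrier_mat n m \<Longrightarrow>
   mat_adjoint (A + B) = mat_adjoint A + mat_adjoint B"
  by (rule eq_matI) auto

lemma mat_adjoint_smult: "mat_adjoint ((c :: complex) \<cdot>\<^sub>m A) = cnj c \<cdot>\<^sub>m mat_adjoint A"
  by (rule eq_matI) auto

lemma mat_adjoint_one [simp]: "mat_adjoint (1\<^sub>m n :: complex mat) = 1\<^sub>m n"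
  by (rule eq_matI) auto

lemma mat_adjoint_mult:
  "(A :: complex mat) \<in> carrier_mat n k \<Longrightarrow> B \<in> carrier_mat k m \<Longrightarrow>
   mat_adjoint (A * B) = mat_adjoint B * mat_adjoint A"
  by (rule eq_matI) (auto simp: scalar_prod_def mult.commute intro!: sum.cong)

lemma hermitian_matD:
  assumes "hermitian_mat n A"
  shows "A \<in> carrier_mat n n" "mat_adjoint A = A"
  using assms unfolding hermitian_mat_def by auto

lemma index_mult_mat_sum:
  "A \<in> carrier_mat n k \<Longrightarrow> B \<in> carrier_mat k m \<Longrightarrow> i < n \<Longrightarrow> j < m \<Longrightarrow>
   (A * B) $$ (i, j) = (\<Sum>t<k. A $$ (i, t) * B $$ (t, j))"
  by (auto simp: scalar_prod_def atLeast0LessThan intro!: sum.cong)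

(* Unlike assoc_mult_mat, the premises mention no dimension absent from the left-hand side,
   so the simplifier can use this rule. *)
lemma assoc_mult_mat_dims:
  "dim_col A = dim_row B \<Longrightarrow> dim_col B = dim_row C \<Longrightarrow> (A :: 'a :: semiring_0 mat) * B * C = A * (B * C)"
  by (rule assoc_mult_mat[of A "dim_row A" "dim_col A" B "dim_col B" C "dim_col C"]) auto

lemma mtrace_mult:
  "A \<in> carrier_mat n m \<Longrightarrow> B \<in> carrier_mat m n \<Longrightarrow>
   mtrace (A * B) = (\<Sum>i<n. \<Sum>j<m. A $$ (i, j) * B $$ (j, i))"
  unfolding mtrace_def by (auto simp: scalar_prod_def atLeast0LessThan intro!: sum.cong)

lemma mtrace_mult_commute:
  "A \<in> carrier_mat n m \<Longrightarrow> B \<in> carrier_mat m n \<Longrightarrow> mtrace (A * B) = mtrace (B * A)"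
  by (simp add: mtrace_mult[of A n m B] mtrace_mult[of B m n A]) (subst sum.swap, simp add: mult.commute)

lemma mtrace_mult_rotate:
  assumes "A \<in> carrier_mat n n" "B \<in> carrier_mat n n" "C \<in> carrier_mat n n"
  shows "mtrace (A * B * C) = mtrace (B * C * A)"
  using assms by (simp add: mtrace_mult_commute[of A n n "B * C"])

lemma mtrace_add:
  "A \<in> carrier_mat n n \<Longrightarrow> B \<in> carrier_mat n n \<Longrightarrow> mtrace (A + B) = mtrace A + mtrace B"
  unfolding mtrace_def by (auto simp: sum.distrib)

lemma mtrace_smult: "A \<in> carrier_mat n n \<Longrightarrow> mtrace (c \<cdot>\<^sub>m A) = c * mtrace A"
  unfolding mtrace_def by (auto simp: sum_distrib_left)

lemma mtrace_adjoint: "(A :: complex mat) \<in> carrier_mat n n \<Longrightarrow> mtrace (mat_adjoint A) = cnj (mtrace A)"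
  unfolding mtrace_def by auto

lemma mtrace_mult_adjoint_swap:
  assumes "(A :: complex mat) \<in> carrier_mat n m" "B \<in> carrier_mat n m"
  shows "mtrace (B * mat_adjoint A) = cnj (mtrace (A * mat_adjoint B))"
proof -
  have "mat_adjoint (A * mat_adjoint B) = B * mat_adjoint A"
    using assms by (simp add: mat_adjoint_mult[OF assms(1) mat_adjoint_carrier[OF assms(2)]])
  then show ?thesis
    using mtrace_adjoint[OF mult_carrier_mat[OF assms(1) mat_adjoint_carrier[OF assms(2)]]] by simp
qed

lemma Im_mtrace_hermitian_mult:
  assumes "hermitian_mat n A" "hermitian_mat n B"
  shows "Im (mtrace (A * B)) = 0"
proof -
  note A = hermitian_matD[OF assms(1)] and B = hermitian_matD[OF assms(2)]
  have "cnj (mtrace (A * B)) = mtrace (mat_adjoint (A * B))"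
    by (rule mtrace_adjoint[symmetric, of _ n]) (use A B in simp)
  also have "mat_adjoint (A * B) = B * A" using A B by (simp add: mat_adjoint_mult[of A n n B n])
  also have "mtrace (B * A) = mtrace (A * B)" using A B by (simp add: mtrace_mult_commute[of B n n A])
  finally show ?thesis by (simp add: complex_eq_iff)
qed

lemma cnj_mtrace_hermitian_triple:
  assumes "hermitian_mat n \<rho>" "hermitian_mat n P" "hermitian_mat n Q"
  shows "cnj (mtrace (\<rho> * P * Q)) = mtrace (\<rho> * Q * P)"
proof -
  note r = hermitian_matD[OF assms(1)] and p = hermitian_matD[OF assms(2)]
    and q = hermitian_matD[OF assms(3)]
  have "cnj (mtrace (\<rho> * P * Q)) = mtrace (mat_adjoint (\<rho> * P * Q))"
    by (rule mtrace_adjoint[symmetric, of _ n]) (use r p q in simp)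
  also have "mat_adjoint (\<rho> * P * Q) = Q * P * \<rho>"
    using r p q by (simp add: mat_adjoint_mult[of _ n n _ n])
  also have "mtrace (Q * P * \<rho>) = mtrace (\<rho> * Q * P)"
    using r p q mtrace_mult_rotate[of Q n P \<rho>] mtrace_mult_rotate[of P n \<rho> Q] by simp
  finally show ?thesis .
qed

lemma minv_inverse:
  assumes A: "A \<in> carrier_mat n n" and B: "B \<in> carrier_mat n n" "A * B = 1\<^sub>m n" "B * A = 1\<^sub>m n"
  shows "minv A \<in> carrier_mat n n \<and> A * minv A = 1\<^sub>m n \<and> minv A * A = 1\<^sub>m n"
  unfolding minv_def using A
    someI[of "\<lambda>B. B \<in> carrier_mat n n \<and> A * B = 1\<^sub>m n \<and> B * A = 1\<^sub>m n", OF conjI[OF B(1) conjI[OF B(2,3)]]]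
  by simp

lemma minv_invertible_mat:
  assumes A: "A \<in> carrier_mat n n" and "invertible_mat A"
  shows "minv A \<in> carrier_mat n n \<and> A * minv A = 1\<^sub>m n \<and> minv A * A = 1\<^sub>m n"
proof -
  obtain B where AB: "A * B = 1\<^sub>m (dim_row A)" and BA: "B * A = 1\<^sub>m (dim_row B)"
    using assms(2) unfolding invertible_mat_def inverts_mat_def by blast
  have "B \<in> carrier_mat n n"
    using arg_cong[OF AB, of dim_col] arg_cong[OF BA, of dim_col] A by (auto intro: carrier_matI)
  then show ?thesis using minv_inverse[OF A] AB BA A by auto
qed

lemma psd_mat_mtrace_sandwich_nonneg:
  assumes psd: "psd_mat D \<rho>" and C: "C \<in> carrier_mat n D"
  shows "0 \<le> Re (mtrace (C * \<rho> * mat_adjoint C))"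
proof -
  have rho: "\<rho> \<in> carrier_mat D D" using psd unfolding psd_mat_def hermitian_mat_def by auto
  define row where "row i = vec D (\<lambda>k. cnj (C $$ (i, k)))" for i
  have "mtrace (C * \<rho> * mat_adjoint C) = (\<Sum>i<n. (C * \<rho> * mat_adjoint C) $$ (i, i))"
    using C rho unfolding mtrace_def by simp
  also have "\<dots> = (\<Sum>i<n. conjugate (row i) \<bullet> (\<rho> *\<^sub>v row i))"
  proof (rule sum.cong[OF refl])
    fix i assume "i \<in> {..<n}"
    then show "(C * \<rho> * mat_adjoint C) $$ (i, i) = conjugate (row i) \<bullet> (\<rho> *\<^sub>v row i)"
      using C rho unfolding row_def
      by (simp add: scalar_prod_def sum_distrib_left sum_distrib_right, subst sum.swap)
        (simp add: mult_ac)
  qed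
  finally have "Re (mtrace (C * \<rho> * mat_adjoint C)) = (\<Sum>i<n. Re (conjugate (row i) \<bullet> (\<rho> *\<^sub>v row i)))"
    by (simp add: Re_sum)
  also have "\<dots> \<ge> 0"
    using psd unfolding psd_mat_def row_def by (intro sum_nonneg) auto
  finally show ?thesis .
qed

subsection \<open>Unitary matrices and the spectral theorem\<close>

definition unitary_mat :: "nat \<Rightarrow> complex mat \<Rightarrow> bool" where
  "unitary_mat n U \<longleftrightarrow> U \<in> carrier_mat n n \<and> U * mat_adjoint U = 1\<^sub>m n"

lemma unitary_matD:
  assumes "unitary_mat n U"
  shows "U \<in> carrier_mat n n" "mat_adjoint U \<in> carrier_mat n n"
    "U * mat_adjoint U = 1\<^sub>m n" "mat_adjoint U * U = 1\<^sub>m n"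
  using assms mat_mult_left_right_inverse[of U n "mat_adjoint U"] mat_adjoint_carrier[of U n n]
  unfolding unitary_mat_def by auto

lemma unitary_mat_adjoint: "unitary_mat n U \<Longrightarrow> unitary_mat n (mat_adjoint U)"
  using unitary_matD[of n U] unfolding unitary_mat_def by simp

lemma unitary_mat_cancel:
  assumes "unitary_mat n V" "A \<in> carrier_mat n k"
  shows "V * (mat_adjoint V * A) = A" "mat_adjoint V * (V * A) = A"
proof -
  note V = unitary_matD[OF assms(1)]
  show "V * (mat_adjoint V * A) = A"
    using assoc_mult_mat[OF V(1,2) assms(2)] V assms(2) by simp
  show "mat_adjoint V * (V * A) = A"
    using assoc_mult_mat[OF V(2,1) assms(2)] V assms(2) by simp
qed

lemma unitary_mat_mult:
  assumes "unitary_mat n U" "unitary_mat n V"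
  shows "unitary_mat n (U * V)"
proof -
  note U = unitary_matD[OF assms(1)] and V = unitary_matD[OF assms(2)]
  have "U * V * mat_adjoint (U * V) = U * (V * (mat_adjoint V * mat_adjoint U))"
    using U V assoc_mult_mat[OF U(1) V(1) mult_carrier_mat[OF V(2) U(2)]]
    by (simp add: mat_adjoint_mult[of U n n V n])
  also have "\<dots> = 1\<^sub>m n" using U V by (simp add: unitary_mat_cancel[OF assms(2)])
  finally show ?thesis using U V unfolding unitary_mat_def by simp
qed

definition diag_block :: "complex \<Rightarrow> complex mat \<Rightarrow> complex mat" where
  "diag_block a M = mat (Suc (dim_row M)) (Suc (dim_col M)) (\<lambda>(i, j).
     if i = 0 then (if j = 0 then a else 0) else if j = 0 then 0 else M $$ (i - 1, j - 1))"

lemma diag_block_carrier [simp]: "M \<in> carrier_mat m k \<Longrightarrow> diag_block a M \<in> carrier_mat (Suc m) (Suc k)"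
  unfolding diag_block_def carrier_mat_def by simp

lemma diag_block_dim [simp]:
  "dim_row (diag_block a M) = Suc (dim_row M)" "dim_col (diag_block a M) = Suc (dim_col M)"
  unfolding diag_block_def by simp_all

lemma index_diag_block [simp]:
  "diag_block a M $$ (0, 0) = a"
  "j < dim_col M \<Longrightarrow> diag_block a M $$ (0, Suc j) = 0"
  "i < dim_row M \<Longrightarrow> diag_block a M $$ (Suc i, 0) = 0"
  "i < dim_row M \<Longrightarrow> j < dim_col M \<Longrightarrow> diag_block a M $$ (Suc i, Suc j) = M $$ (i, j)"
  unfolding diag_block_def by simp_all

lemma diag_block_mult:
  assumes M: "M \<in> carrier_mat m k" and N: "N \<in> carrier_mat k l"
  shows "diag_block a M * diag_block b N = diag_block (a * b) (M * N)"
proof (rule eq_matI)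
  fix i j assume "i < dim_row (diag_block (a * b) (M * N))" "j < dim_col (diag_block (a * b) (M * N))"
  then have i: "i < Suc m" and j: "j < Suc l" using M N by auto
  have "(diag_block a M * diag_block b N) $$ (i, j)
      = (\<Sum>t<Suc k. diag_block a M $$ (i, t) * diag_block b N $$ (t, j))"
    by (rule index_mult_mat_sum[OF diag_block_carrier[OF M] diag_block_carrier[OF N] i j])
  also have "\<dots> = diag_block a M $$ (i, 0) * diag_block b N $$ (0, j)
        + (\<Sum>t<k. diag_block a M $$ (i, Suc t) * diag_block b N $$ (Suc t, j))"
    by (rule sum.lessThan_Suc_shift)
  also have "\<dots> = diag_block (a * b) (M * N) $$ (i, j)"
    using M N i j
    by (cases i; cases j) (auto simp: index_mult_mat_sum[OF M N] simp del: index_mult_mat(1))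
  finally show "(diag_block a M * diag_block b N) $$ (i, j) = diag_block (a * b) (M * N) $$ (i, j)" .
qed (use M N in auto)

lemma diag_block_adjoint: "mat_adjoint (diag_block a M) = diag_block (cnj a) (mat_adjoint M)"
proof (rule eq_matI)
  fix i j assume "i < dim_row (diag_block (cnj a) (mat_adjoint M))" "j < dim_col (diag_block (cnj a) (mat_adjoint M))"
  then show "mat_adjoint (diag_block a M) $$ (i, j) = diag_block (cnj a) (mat_adjoint M) $$ (i, j)"
    by (cases i; cases j) auto
qed auto

lemma diag_block_one: "diag_block 1 (1\<^sub>m m) = 1\<^sub>m (Suc m)"
proof (rule eq_matI)
  fix i j assume "i < dim_row (1\<^sub>m (Suc m) :: complex mat)" "j < dim_col (1\<^sub>m (Suc m) :: complex mat)"
  then show "diag_block 1 (1\<^sub>m m) $$ (i, j) = 1\<^sub>m (Suc m) $$ (i, j)"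
    by (cases i; cases j) auto
qed auto

lemma diagonal_mat_diag_block: "diagonal_mat M \<Longrightarrow> diagonal_mat (diag_block a M)"
  unfolding diagonal_mat_def
proof (intro allI impI)
  fix i j assume "\<forall>i<dim_row M. \<forall>j<dim_col M. i \<noteq> j \<longrightarrow> M $$ (i, j) = 0"
    and "i < dim_row (diag_block a M)" "j < dim_col (diag_block a M)" "i \<noteq> j"
  then show "diag_block a M $$ (i, j) = 0"
    by (cases i; cases j) auto
qed

lemma unitary_mat_diag_block: "unitary_mat m V \<Longrightarrow> unitary_mat (Suc m) (diag_block 1 V)"
  unfolding unitary_mat_def
  by (simp add: diag_block_adjoint diag_block_mult[of V m m "mat_adjoint V" m] diag_block_one
      mat_adjoint_carrier)

(* For w = 0 the junk value 2 / 0 = 0 makes this the identity. *)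
definition householder_mat :: "nat \<Rightarrow> (nat \<Rightarrow> complex) \<Rightarrow> complex mat" where
  "householder_mat n w = mat n n (\<lambda>(i, j).
     (if i = j then 1 else 0) - of_real (2 / (\<Sum>k<n. (cmod (w k))\<^sup>2)) * w i * cnj (w j))"

lemma householder_mat_carrier: "householder_mat n w \<in> carrier_mat n n"
  unfolding householder_mat_def by simp

lemma householder_mat_adjoint: "mat_adjoint (householder_mat n w) = householder_mat n w"
  by (rule eq_matI) (auto simp: householder_mat_def)

lemma householder_mat_involution: "householder_mat n w * householder_mat n w = 1\<^sub>m n"
proof (rule eq_matI)
  define nw where "nw = (\<Sum>k<n. (cmod (w k))\<^sup>2)"
  define c where "c = 2 / nw"
  let ?H = "householder_mat n w"
  have H: "?H \<in> carrier_mat n n" by (rule householder_mat_carrier)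
  have Hij: "?H $$ (i, j) = (if i = j then 1 else 0) - of_real c * w i * cnj (w j)"
    if "i < n" "j < n" for i j
    using that unfolding householder_mat_def c_def nw_def by simp
  have wsq: "(\<Sum>k<n. cnj (w k) * w k) = of_real nw"
    unfolding nw_def of_real_sum by (rule sum.cong, simp, simp only: complex_norm_square mult.commute)
  have cnw: "c * nw * c = 2 * c"
    unfolding c_def by (cases "nw = 0") auto
  fix i j assume "i < dim_row (1\<^sub>m n :: complex mat)" "j < dim_col (1\<^sub>m n :: complex mat)"
  then have i: "i < n" and j: "j < n" by auto
  have "(?H * ?H) $$ (i, j) = (\<Sum>k<n. ((if i = k then 1 else 0) - of_real c * w i * cnj (w k)) *
        ((if k = j then 1 else 0) - of_real c * w k * cnj (w j)))"
    by (subst index_mult_mat_sum[OF H H i j], rule sum.cong) (simp_all add: Hij i j)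
  also have "\<dots> = (\<Sum>k<n. (if i = k then 1 else 0) * (if k = j then 1 else 0))
      - (\<Sum>k<n. (if i = k then 1 else 0) * (of_real c * w k * cnj (w j)))
      - (\<Sum>k<n. (if k = j then 1 else 0) * (of_real c * w i * cnj (w k)))
      + of_real c * w i * cnj (w j) * of_real c * (\<Sum>k<n. cnj (w k) * w k)"
    by (simp add: algebra_simps sum.distrib sum_subtractf sum_distrib_left sum_distrib_right)
  also have "\<dots> = (if i = j then 1 else 0) - 2 * of_real c * w i * cnj (w j)
       + of_real (c * nw * c) * w i * cnj (w j)"
    using i j by (simp add: wsq if_distrib[of "\<lambda>x. x * _"] cong: if_cong)
  also have "\<dots> = 1\<^sub>m n $$ (i, j)" using i j by (simp add: cnw)
  finally show "(?H * ?H) $$ (i, j) = 1\<^sub>m n $$ (i, j)" .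
qed (auto simp: householder_mat_def)

lemma householder_mat_first_unit_vec:
  fixes u :: "complex vec"
  assumes u: "u \<in> carrier_vec n" and n: "0 < n"
    and nu: "(\<Sum>i<n. (cmod (u $ i))\<^sup>2) = 1" and u0: "Im (u $ 0) = 0" "0 \<le> Re (u $ 0)"
  shows "householder_mat n (\<lambda>i. (if i = 0 then 1 else 0) - u $ i) *\<^sub>v unit_vec n 0 = u"
proof (rule eq_vecI)
  define w where "w i = (if i = 0 then 1 else 0) - u $ i" for i
  define nw where "nw = (\<Sum>i<n. (cmod (w i))\<^sup>2)"
  have w0: "w 0 = of_real (1 - Re (u $ 0))"
    unfolding w_def using u0 by (simp add: complex_eq_iff)
  have split: "(\<Sum>i<n. f i) = f 0 + (\<Sum>i<n - 1. f (Suc i))" for f :: "nat \<Rightarrow> real"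
    using n by (metis Suc_diff_1 sum.lessThan_Suc_shift)
  have rest: "(\<Sum>i<n - 1. (cmod (u $ Suc i))\<^sup>2) = 1 - (Re (u $ 0))\<^sup>2"
    using nu split[of "\<lambda>i. (cmod (u $ i))\<^sup>2"] u0 by (simp add: cmod_eq_Re)
  have cmod_1_minus: "cmod (1 - of_real r) = \<bar>1 - r\<bar>" for r
    by (metis norm_of_real of_real_1 of_real_diff)
  have "nw = (1 - Re (u $ 0))\<^sup>2 + (1 - (Re (u $ 0))\<^sup>2)"
    unfolding nw_def split[of "\<lambda>i. (cmod (w i))\<^sup>2"] w0 rest[symmetric]
    by (simp add: w_def norm_minus_commute cmod_1_minus)
  then have nw: "nw = 2 * (1 - Re (u $ 0))" by (simp add: power2_eq_square algebra_simps)
  fix i assume "i < dim_vec u"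
  then have i: "i < n" using u by auto
  have "(householder_mat n w *\<^sub>v unit_vec n 0) $ i = (if i = 0 then 1 else 0) - of_real (2 / nw) * w i * cnj (w 0)"
    using i n unfolding householder_mat_def nw_def by simp
  also have "\<dots> = u $ i"
  proof (cases "Re (u $ 0) = 1")
    case True
    then have "nw = 0" using nw by simp
    then have "(cmod (w i))\<^sup>2 = 0"
      using i unfolding nw_def by (subst (asm) sum_nonneg_eq_0_iff) auto
    then have wi: "w i = 0" by simp
    then have "u $ i = (if i = 0 then 1 else 0)" unfolding w_def by simp
    with wi show ?thesis by simp
  next
    case False
    then have "2 / nw * (1 - Re (u $ 0)) = 1" unfolding nw by simp
    then have "of_real (2 / nw) * cnj (w 0) = 1" unfolding w0
      by (metis complex_cnj_complex_of_real of_real_1 of_real_mult)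
    moreover have "of_real (2 / nw) * w i * cnj (w 0) = w i * (of_real (2 / nw) * cnj (w 0))"
      by (simp add: mult_ac)
    ultimately show ?thesis unfolding w_def by simp
  qed
  finally show "(householder_mat n (\<lambda>i. (if i = 0 then 1 else 0) - u $ i) *\<^sub>v unit_vec n 0) $ i = u $ i"
    unfolding w_def .
qed (use u householder_mat_carrier in auto)

lemma eigenvector_exists:
  fixes A :: "complex mat"
  assumes A: "A \<in> carrier_mat (Suc m) (Suc m)"
  shows "\<exists>e v. v \<in> carrier_vec (Suc m) \<and> v \<noteq> 0\<^sub>v (Suc m) \<and> A *\<^sub>v v = e \<cdot>\<^sub>v v"
proof -
  obtain es where "char_poly A = (\<Prod>a\<leftarrow>es. [:- a, 1:])" and "length es = Suc m"
    using char_poly_factorized[OF A] by blast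
  then obtain e where "poly (char_poly A) e = 0"
    by (cases es) (auto simp: poly_prod_list)
  then have "eigenvalue A e" using eigenvalue_root_char_poly[OF A] by simp
  then show ?thesis unfolding eigenvalue_def eigenvector_def using A by auto
qed

lemma normalized_eigenvector_exists:
  fixes A :: "complex mat"
  assumes A: "A \<in> carrier_mat (Suc m) (Suc m)"
  shows "\<exists>e u. u \<in> carrier_vec (Suc m) \<and> A *\<^sub>v u = e \<cdot>\<^sub>v u \<and> (\<Sum>i<Suc m. (cmod (u $ i))\<^sup>2) = 1
     \<and> Im (u $ 0) = 0 \<and> 0 \<le> Re (u $ 0)"
proof -
  obtain e v where v: "v \<in> carrier_vec (Suc m)" "v \<noteq> 0\<^sub>v (Suc m)" "A *\<^sub>v v = e \<cdot>\<^sub>v v"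
    using eigenvector_exists[OF A] by blast
  obtain i0 where i0: "i0 < Suc m" "v $ i0 \<noteq> 0"
    using v(1,2) by (metis eq_vecI carrier_vecD index_zero_vec)
  define s where "s = (\<Sum>i<Suc m. (cmod (v $ i))\<^sup>2)"
  have "(cmod (v $ i0))\<^sup>2 \<le> s" unfolding s_def
    by (rule member_le_sum) (use i0 in auto)
  moreover have "0 < (cmod (v $ i0))\<^sup>2" using i0 by simp
  ultimately have s: "0 < s" by linarith
  define ph where "ph = (if v $ 0 = 0 then 1 else cnj (v $ 0) / of_real (cmod (v $ 0)))"
  have cph: "cmod ph = 1" unfolding ph_def by (simp add: norm_divide)
  define k where "k = ph / of_real (sqrt s)"
  define u where "u = k \<cdot>\<^sub>v v"
  have u: "u \<in> carrier_vec (Suc m)" unfolding u_def using v by simp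
  have Au: "A *\<^sub>v u = e \<cdot>\<^sub>v u"
    unfolding u_def using mult_mat_vec[OF A v(1), of k] v(3) by (auto intro!: eq_vecI)
  have ck: "(cmod k)\<^sup>2 = 1 / s" unfolding k_def using s cph
    by (simp add: norm_divide power_divide)
  have "(\<Sum>i<Suc m. (cmod (u $ i))\<^sup>2) = (\<Sum>i<Suc m. (cmod k)\<^sup>2 * (cmod (v $ i))\<^sup>2)"
    unfolding u_def using v(1) by (intro sum.cong) (auto simp: norm_mult power_mult_distrib)
  also have "\<dots> = 1" unfolding sum_distrib_left[symmetric] ck s_def[symmetric] using s by simp
  finally have nu: "(\<Sum>i<Suc m. (cmod (u $ i))\<^sup>2) = 1" .
  have u0: "u $ 0 = of_real (cmod (v $ 0) / sqrt s)"
  proof (cases "v $ 0 = 0")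
    case True
    then show ?thesis unfolding u_def k_def ph_def using v(1) by simp
  next
    case False
    have "u $ 0 = cnj (v $ 0) * v $ 0 / of_real (cmod (v $ 0)) / of_real (sqrt s)"
      unfolding u_def k_def ph_def using v(1) False by simp
    also have "cnj (v $ 0) * v $ 0 = of_real ((cmod (v $ 0))\<^sup>2)"
      by (simp only: complex_norm_square mult.commute)
    finally show ?thesis using False by (simp add: power2_eq_square)
  qed
  have "Im (u $ 0) = 0" "0 \<le> Re (u $ 0)" unfolding u0 using s by simp_all
  then show ?thesis using u Au nu by blast
qed

lemma hermitian_deflation:
  assumes A: "hermitian_mat (Suc m) A" and H: "unitary_mat (Suc m) H" "mat_adjoint H = H"
    and eig: "A *\<^sub>v (H *\<^sub>v unit_vec (Suc m) 0) = e \<cdot>\<^sub>v (H *\<^sub>v unit_vec (Suc m) 0)"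
  shows "\<exists>A'. hermitian_mat m A' \<and> H * A * H = diag_block e A'"
proof -
  note A = hermitian_matD[OF A] and H' = unitary_matD[OF H(1), unfolded H(2)]
  define B where "B = H * A * H"
  have B: "B \<in> carrier_mat (Suc m) (Suc m)" unfolding B_def using H' A by simp
  have "mat_adjoint B = B"
    unfolding B_def using H' A by (simp add: mat_adjoint_mult[of _ "Suc m" "Suc m" _ "Suc m"] H(2))
  then have Bsym: "cnj (B $$ (j, i)) = B $$ (i, j)" if "i < Suc m" "j < Suc m" for i j
    using arg_cong[of _ _ "\<lambda>M. M $$ (i, j)"] B that by (metis carrier_matD index_mat_adjoint)
  have "B *\<^sub>v unit_vec (Suc m) 0 = H *\<^sub>v (A *\<^sub>v (H *\<^sub>v unit_vec (Suc m) 0))"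
    unfolding B_def using H' A by (simp add: assoc_mult_mat_vec[of _ "Suc m" "Suc m" _ "Suc m"])
  also have "\<dots> = e \<cdot>\<^sub>v (H *\<^sub>v (H *\<^sub>v unit_vec (Suc m) 0))"
    unfolding eig using H' by (simp add: mult_mat_vec)
  also have "H *\<^sub>v (H *\<^sub>v unit_vec (Suc m) 0) = unit_vec (Suc m) 0"
    using H' by (simp flip: assoc_mult_mat_vec[of _ "Suc m" "Suc m" _ "Suc m"])
  finally have Be: "B *\<^sub>v unit_vec (Suc m) 0 = e \<cdot>\<^sub>v unit_vec (Suc m) 0" .
  have col0: "B $$ (i, 0) = (if i = 0 then e else 0)" if "i < Suc m" for i
    using arg_cong[OF Be, of "\<lambda>v. v $ i"] B that by simp
  have row0: "B $$ (0, j) = (if j = 0 then e else 0)" if "j < Suc m" for j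
  proof -
    have "B $$ (0, j) = cnj (B $$ (j, 0))" by (rule Bsym[symmetric]) (use that in auto)
    also have "\<dots> = (if j = 0 then e else 0)"
      using col0[OF that] col0[of 0] Bsym[of 0 0] by auto
    finally show ?thesis .
  qed
  define A' where "A' = mat m m (\<lambda>(i, j). B $$ (Suc i, Suc j))"
  have "hermitian_mat m A'"
    unfolding hermitian_mat_def A'_def by (auto intro!: eq_matI simp: Bsym)
  moreover have "B = diag_block e A'"
  proof (rule eq_matI)
    fix i j assume "i < dim_row (diag_block e A')" "j < dim_col (diag_block e A')"
    then have i: "i < Suc m" and j: "j < Suc m" by (auto simp: A'_def)
    then show "B $$ (i, j) = diag_block e A' $$ (i, j)"
      using row0 col0 by (cases i; cases j) (auto simp: A'_def)
  qed (use B in \<open>auto simp: A'_def\<close>)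
  ultimately show ?thesis unfolding B_def by blast
qed

lemma hermitian_spectral_decomposition:
  assumes "hermitian_mat n A"
  shows "\<exists>V L. unitary_mat n V \<and> L \<in> carrier_mat n n \<and> diagonal_mat L \<and> A = V * L * mat_adjoint V"
  using assms
proof (induction n arbitrary: A)
  case 0
  then have "A = 1\<^sub>m 0 * 1\<^sub>m 0 * mat_adjoint (1\<^sub>m 0)"
    by (intro eq_matI) (auto simp: hermitian_mat_def)
  moreover have "unitary_mat 0 (1\<^sub>m 0)" "diagonal_mat (1\<^sub>m 0 :: complex mat)"
    unfolding unitary_mat_def diagonal_mat_def by auto
  ultimately show ?case by (intro exI[of _ "1\<^sub>m 0"]) auto
next
  case (Suc m)
  note A = hermitian_matD[OF Suc.prems]
  obtain e u where u: "u \<in> carrier_vec (Suc m)" and Au: "A *\<^sub>v u = e \<cdot>\<^sub>v u"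
    and nu: "(\<Sum>i<Suc m. (cmod (u $ i))\<^sup>2) = 1" and u0: "Im (u $ 0) = 0" "0 \<le> Re (u $ 0)"
    using normalized_eigenvector_exists[OF A(1)] by blast
  define H where "H = householder_mat (Suc m) (\<lambda>i. (if i = 0 then 1 else 0) - u $ i)"
  have Hh: "mat_adjoint H = H" unfolding H_def by (rule householder_mat_adjoint)
  have H: "unitary_mat (Suc m) H"
    unfolding unitary_mat_def Hh unfolding H_def
    using householder_mat_carrier householder_mat_involution by blast
  have He: "H *\<^sub>v unit_vec (Suc m) 0 = u"
    unfolding H_def by (rule householder_mat_first_unit_vec[OF u _ nu u0]) simp
  obtain A' where A': "hermitian_mat m A'" and HAH: "H * A * H = diag_block e A'"
    using hermitian_deflation[OF Suc.prems H Hh] Au He by auto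
  obtain V' L' where V': "unitary_mat m V'" and L': "L' \<in> carrier_mat m m" "diagonal_mat L'"
    and A'e: "A' = V' * L' * mat_adjoint V'"
    using Suc.IH[OF A'] by blast
  note H' = unitary_matD[OF H, unfolded Hh] and V'' = unitary_matD[OF V']
  define V where "V = H * diag_block 1 V'"
  define L where "L = diag_block e L'"
  have V: "unitary_mat (Suc m) V"
    unfolding V_def by (rule unitary_mat_mult[OF H unitary_mat_diag_block[OF V']])
  have L: "L \<in> carrier_mat (Suc m) (Suc m)" "diagonal_mat L"
    unfolding L_def using L' by (auto intro: diagonal_mat_diag_block)
  have "A = H * (H * A * H) * H"
    using H' A by (simp add: assoc_mult_mat_dims unitary_mat_cancel[OF H, unfolded Hh])
  also have "H * A * H = diag_block 1 V' * L * diag_block 1 (mat_adjoint V')"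
    unfolding HAH A'e L_def using V'' L' by (simp add: diag_block_mult[of _ m m _ m])
  also have "H * (diag_block 1 V' * L * diag_block 1 (mat_adjoint V')) * H = V * L * mat_adjoint V"
    unfolding V_def using H' V'' L
    by (simp add: mat_adjoint_mult[of H "Suc m" "Suc m" _ "Suc m"] diag_block_adjoint assoc_mult_mat_dims Hh)
  finally show ?case using V L by blast
qed

subsection \<open>The trace norm\<close>

lemma trace_norm_eq_sum_sqrt_diag:
  assumes B: "B \<in> carrier_mat n n" and V: "unitary_mat n V"
    and L: "L \<in> carrier_mat n n" "diagonal_mat L"
    and BB: "mat_adjoint B * B = V * L * mat_adjoint V"
  shows "trace_norm B = (\<Sum>i<n. sqrt (Re (L $$ (i, i))))"
proof -
  let ?f = "\<lambda>e. sqrt (Re e)"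
  note V' = unitary_matD[OF V]
  have BB_carrier: "mat_adjoint B * B \<in> carrier_mat n n"
    using mult_carrier_mat[OF mat_adjoint_carrier[OF B] B] .
  have "similar_mat (mat_adjoint B * B) L"
    by (rule similar_matI[of _ L V "mat_adjoint V" n]) (use BB_carrier L V' BB in auto)
  moreover have "upper_triangular L"
    using L unfolding diagonal_mat_def upper_triangular_def by auto
  ultimately have cp: "char_poly (mat_adjoint B * B) = (\<Prod>a\<leftarrow>diag_mat L. [:- a, 1:])"
    using char_poly_similar char_poly_upper_triangular[OF L(1)] by metis
  let ?Q = "\<lambda>s. \<exists>es. char_poly (mat_adjoint B * B) = (\<Prod>e\<leftarrow>es. [:- e, 1:]) \<and> s = sum_list (map ?f es)"
  have "?Q (sum_list (map ?f (diag_mat L)))" using cp by blast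
  then have "?Q (trace_norm B)" unfolding trace_norm_def by (rule someI)
  then obtain es where es: "(\<Prod>e\<leftarrow>es. [:- e, 1:]) = (\<Prod>a\<leftarrow>diag_mat L. [:- a, 1:])"
    and tn: "trace_norm B = sum_list (map ?f es)"
    using cp by auto
  from es have "mset es = mset (diag_mat L)" by (rule reconstruct_poly_monic_defines_mset)
  then have "trace_norm B = sum_list (map ?f (diag_mat L))"
    unfolding tn by (metis mset_map sum_mset_sum_list)
  also have "\<dots> = (\<Sum>i<n. ?f (L $$ (i, i)))"
    using L unfolding diag_mat_def
    by (simp add: sum_set_upt_conv_sum_list_nat[symmetric] atLeast0LessThan)
  finally show ?thesis .
qed

(* Row by row this is the Cauchy-Schwarz inequality, the rows of Y being unit vectors. *)
lemma Re_mtrace_unitary_mult_le: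
  assumes Y: "unitary_mat n Y" and C: "C \<in> carrier_mat n n"
  shows "Re (mtrace (Y * C)) \<le> (\<Sum>i<n. sqrt (Re ((mat_adjoint C * C) $$ (i, i))))"
proof -
  note Y' = unitary_matD[OF Y]
  have cmod_sq: "(of_real (cmod z))\<^sup>2 = z * cnj z" for z
    using complex_norm_square[of z] by simp
  have row: "(\<Sum>k<n. (cmod (Y $$ (i, k)))\<^sup>2) = 1" if i: "i < n" for i
  proof -
    have "of_real (\<Sum>k<n. (cmod (Y $$ (i, k)))\<^sup>2) = (\<Sum>k<n. Y $$ (i, k) * mat_adjoint Y $$ (k, i))"
      unfolding of_real_sum using Y' i by (intro sum.cong) (auto simp: cmod_sq)
    also have "\<dots> = (Y * mat_adjoint Y) $$ (i, i)" using index_mult_mat_sum[OF Y'(1,2) i i] by simp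
    also have "\<dots> = 1" using Y' i by simp
    finally show ?thesis using of_real_eq_1_iff by blast
  qed
  have col: "(\<Sum>k<n. (cmod (C $$ (k, i)))\<^sup>2) = Re ((mat_adjoint C * C) $$ (i, i))" if i: "i < n" for i
  proof -
    have "of_real (\<Sum>k<n. (cmod (C $$ (k, i)))\<^sup>2) = (\<Sum>k<n. mat_adjoint C $$ (i, k) * C $$ (k, i))"
      unfolding of_real_sum using C i by (intro sum.cong) (auto simp: cmod_sq mult.commute)
    also have "\<dots> = (mat_adjoint C * C) $$ (i, i)"
      using index_mult_mat_sum[OF mat_adjoint_carrier[OF C] C i i] by simp
    finally show ?thesis by (metis Re_complex_of_real)
  qed
  have "Re (mtrace (Y * C)) = (\<Sum>i<n. Re (\<Sum>k<n. Y $$ (i, k) * C $$ (k, i)))"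
    unfolding mtrace_mult[OF Y'(1) C] Re_sum ..
  also have "\<dots> \<le> (\<Sum>i<n. sqrt (Re ((mat_adjoint C * C) $$ (i, i))))"
  proof (rule sum_mono)
    fix i assume "i \<in> {..<n}"
    then have i: "i < n" by simp
    have "Re (\<Sum>k<n. Y $$ (i, k) * C $$ (k, i)) \<le> cmod (\<Sum>k<n. Y $$ (i, k) * C $$ (k, i))"
      by (rule complex_Re_le_cmod)
    also have "\<dots> \<le> (\<Sum>k<n. cmod (Y $$ (i, k) * C $$ (k, i)))" by (rule norm_sum)
    also have "\<dots> = (\<Sum>k<n. cmod (Y $$ (i, k)) * cmod (C $$ (k, i)))" by (simp add: norm_mult)
    also have "\<dots> \<le> L2_set (\<lambda>k. cmod (Y $$ (i, k))) {..<n} * L2_set (\<lambda>k. cmod (C $$ (k, i))) {..<n}"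
      using L2_set_mult_ineq[of "\<lambda>k. cmod (Y $$ (i, k))" "\<lambda>k. cmod (C $$ (k, i))" "{..<n}"] by simp
    also have "\<dots> = sqrt (Re ((mat_adjoint C * C) $$ (i, i)))"
      unfolding L2_set_def using row[OF i] col[OF i] by simp
    finally show "Re (\<Sum>k<n. Y $$ (i, k) * C $$ (k, i)) \<le> sqrt (Re ((mat_adjoint C * C) $$ (i, i)))" .
  qed
  finally show ?thesis .
qed

lemma Re_mtrace_mult_unitary_le_trace_norm:
  assumes B: "B \<in> carrier_mat n n" and U: "unitary_mat n U"
  shows "Re (mtrace (B * U)) \<le> trace_norm B"
proof -
  have Ba: "mat_adjoint B \<in> carrier_mat n n" using B by (rule mat_adjoint_carrier)
  have "hermitian_mat n (mat_adjoint B * B)"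
    unfolding hermitian_mat_def using B Ba by (simp add: mat_adjoint_mult[OF Ba B])
  then obtain V L where V: "unitary_mat n V" and L: "L \<in> carrier_mat n n" "diagonal_mat L"
    and BB: "mat_adjoint B * B = V * L * mat_adjoint V"
    using hermitian_spectral_decomposition by blast
  note V' = unitary_matD[OF V] and U' = unitary_matD[OF U]
  define Y where "Y = mat_adjoint V * U"
  define C where "C = B * V"
  have Y: "unitary_mat n Y" unfolding Y_def by (rule unitary_mat_mult[OF unitary_mat_adjoint[OF V] U])
  have C: "C \<in> carrier_mat n n" unfolding C_def using B V' by simp
  have "mtrace (Y * C) = mtrace (mat_adjoint V * (U * B * V))"
    unfolding Y_def C_def using V' U' B by (simp add: assoc_mult_mat_dims)
  also have "\<dots> = mtrace (U * B * V * mat_adjoint V)"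
    using V' U' B by (intro mtrace_mult_commute) auto
  also have "\<dots> = mtrace (B * U)"
    using V' U' B by (simp add: assoc_mult_mat_dims mtrace_mult_commute[of U n n B])
  finally have tr: "mtrace (B * U) = mtrace (Y * C)" ..
  have "mat_adjoint C * C = mat_adjoint V * (mat_adjoint B * B) * V"
    unfolding C_def using V' B Ba by (simp add: mat_adjoint_mult[OF B V'(1)] assoc_mult_mat_dims)
  also have "\<dots> = L"
    unfolding BB using V' L by (simp add: assoc_mult_mat_dims unitary_mat_cancel[OF V])
  finally have "mat_adjoint C * C = L" .
  then have "Re (mtrace (B * U)) \<le> (\<Sum>i<n. sqrt (Re (L $$ (i, i))))"
    using Re_mtrace_unitary_mult_le[OF Y C] tr by simp
  also have "\<dots> = trace_norm B"
    by (rule trace_norm_eq_sum_sqrt_diag[OF B V L BB, symmetric])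
  finally show ?thesis .
qed

definition signed_perm_mat :: "nat \<Rightarrow> (nat \<Rightarrow> nat) \<Rightarrow> (nat \<Rightarrow> real) \<Rightarrow> complex mat" where
  "signed_perm_mat n p t = mat n n (\<lambda>(b, a). if b = p a then of_real (t a) else 0)"

lemma index_signed_perm_mat:
  "b < n \<Longrightarrow> a < n \<Longrightarrow> signed_perm_mat n p t $$ (b, a) = (if b = p a then of_real (t a) else 0)"
  unfolding signed_perm_mat_def by simp

lemma signed_perm_mat_unitary:
  assumes p: "bij_betw p {..<n} {..<n}" and t: "\<forall>a<n. \<bar>t a\<bar> = 1"
  shows "unitary_mat n (signed_perm_mat n p t)"
proof -
  let ?P = "signed_perm_mat n p t"
  have P: "?P \<in> carrier_mat n n" and Pa: "mat_adjoint ?P \<in> carrier_mat n n"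
    unfolding signed_perm_mat_def by (auto intro: mat_adjoint_carrier)
  have "mat_adjoint ?P * ?P = 1\<^sub>m n"
  proof (rule eq_matI)
    fix a a' assume "a < dim_row (1\<^sub>m n :: complex mat)" "a' < dim_col (1\<^sub>m n :: complex mat)"
    then have a: "a < n" and a': "a' < n" by auto
    have pa: "p a < n" using p a by (auto simp: bij_betw_def)
    have "(mat_adjoint ?P * ?P) $$ (a, a') = (\<Sum>b<n. mat_adjoint ?P $$ (a, b) * ?P $$ (b, a'))"
      by (rule index_mult_mat_sum[OF Pa P a a'])
    also have "\<dots> = (\<Sum>b<n. if b = p a then of_real (t a) * ?P $$ (b, a') else 0)"
      by (intro sum.cong refl) (use P a in \<open>auto simp: index_signed_perm_mat\<close>)
    also have "\<dots> = of_real (t a) * ?P $$ (p a, a')" using pa by simp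
    also have "\<dots> = (if a = a' then 1 else 0)"
    proof (cases "a = a'")
      case True
      have "t a * t a = 1" using t a by (metis abs_mult_self_eq mult_1_right)
      then show ?thesis using True pa a by (simp add: index_signed_perm_mat flip: of_real_mult)
    next
      case False
      then have "p a \<noteq> p a'" using p a a' by (auto simp: bij_betw_def inj_on_def)
      then show ?thesis using False pa a' by (simp add: index_signed_perm_mat)
    qed
    finally show "(mat_adjoint ?P * ?P) $$ (a, a') = 1\<^sub>m n $$ (a, a')" using a a' by simp
  qed (use P in auto)
  then show ?thesis
    unfolding unitary_mat_def using P mat_mult_left_right_inverse[OF Pa P] by simp
qed

lemma mtrace_mult_signed_perm_mat:
  assumes J: "J \<in> carrier_mat n n" and p: "\<forall>a<n. p a < n"
  shows "mtrace (J * signed_perm_mat n p t) = (\<Sum>a<n. J $$ (a, p a) * of_real (t a))"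
proof -
  have "mtrace (J * signed_perm_mat n p t) = (\<Sum>a<n. \<Sum>b<n. J $$ (a, b) * signed_perm_mat n p t $$ (b, a))"
    by (rule mtrace_mult[OF J]) (simp add: signed_perm_mat_def)
  also have "\<dots> = (\<Sum>a<n. \<Sum>b<n. if b = p a then J $$ (a, b) * of_real (t a) else 0)"
    by (intro sum.cong refl) (simp add: index_signed_perm_mat)
  also have "\<dots> = (\<Sum>a<n. J $$ (a, p a) * of_real (t a))"
    using p by (intro sum.cong refl) simp
  finally show ?thesis .
qed

subsection \<open>Completing the square\<close>

lemma hermitian_inverse:
  assumes "hermitian_mat n \<rho>" "R \<in> carrier_mat n n" "\<rho> * R = 1\<^sub>m n"
  shows "mat_adjoint R = R"
proof -
  note r = hermitian_matD[OF assms(1)]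
  have Ra: "mat_adjoint R \<in> carrier_mat n n" using assms(2) by (rule mat_adjoint_carrier)
  have "mat_adjoint R * \<rho> = 1\<^sub>m n"
    using mat_adjoint_mult[OF r(1) assms(2)] assms(3) r(2) by simp
  have "mat_adjoint R = mat_adjoint R * (\<rho> * R)" using Ra assms(2,3) by simp
  also have "\<dots> = (mat_adjoint R * \<rho>) * R" using Ra r(1) assms(2) by simp
  also have "\<dots> = R" using \<open>mat_adjoint R * \<rho> = 1\<^sub>m n\<close> assms(2) by simp
  finally show ?thesis .
qed

lemma mtrace_completing_square:
  fixes \<rho> R W G :: "complex mat"
  assumes psd: "psd_mat D \<rho>" and R: "R \<in> carrier_mat D D" "\<rho> * R = 1\<^sub>m D" "R * \<rho> = 1\<^sub>m D"
    and W: "W \<in> carrier_mat D D" and G: "G \<in> carrier_mat D D"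
  shows "0 \<le> Re (mtrace (W * \<rho> * mat_adjoint W)) + 2 * Re (mtrace (G * mat_adjoint W))
            + Re (mtrace (G * R * mat_adjoint G))"
proof -
  have rho: "\<rho> \<in> carrier_mat D D" and rh: "hermitian_mat D \<rho>"
    using psd unfolding psd_mat_def hermitian_mat_def by auto
  have Rh: "mat_adjoint R = R" by (rule hermitian_inverse[OF rh R(1,2)])
  have Wa: "mat_adjoint W \<in> carrier_mat D D" and Ga: "mat_adjoint G \<in> carrier_mat D D"
    using W G by (auto intro: mat_adjoint_carrier)
  have GR: "G * R \<in> carrier_mat D D" and RGa: "R * mat_adjoint G \<in> carrier_mat D D"
    using G R Ga by auto
  (* expand 0 <= tr[C rho C^dagger] for C = W + G rho^-1 *)
  define C where "C = W + G * R"
  have C: "C \<in> carrier_mat D D" unfolding C_def using W GR by simp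
  have Ca: "mat_adjoint C = mat_adjoint W + R * mat_adjoint G"
    unfolding C_def mat_adjoint_add[OF W GR] mat_adjoint_mult[OF G R(1)] Rh ..
  have "C * \<rho> = W * \<rho> + G"
    unfolding C_def using add_mult_distrib_mat[OF W GR rho] G R rho by simp
  then have "C * \<rho> * mat_adjoint C = (W * \<rho> * mat_adjoint W + G * mat_adjoint W)
        + (W * \<rho> * (R * mat_adjoint G) + G * (R * mat_adjoint G))"
    unfolding Ca using W G rho Wa RGa
    by (simp add: add_mult_distrib_mat[of _ D D] mult_add_distrib_mat[of _ D D])
  also have "W * \<rho> * (R * mat_adjoint G) = W * mat_adjoint G"
    using W G rho R Ga by (simp add: assoc_mult_mat_dims flip: assoc_mult_mat[OF rho R(1) Ga])
  finally have eq: "C * \<rho> * mat_adjoint C = (W * \<rho> * mat_adjoint W + G * mat_adjoint W)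
        + (W * mat_adjoint G + G * (R * mat_adjoint G))" .
  have "mtrace (C * \<rho> * mat_adjoint C) = (mtrace (W * \<rho> * mat_adjoint W) + mtrace (G * mat_adjoint W))
        + (mtrace (W * mat_adjoint G) + mtrace (G * R * mat_adjoint G))"
    unfolding eq using W G rho Wa Ga R RGa
    by (simp add: mtrace_add[of _ D] assoc_mult_mat_dims)
  moreover have "mtrace (W * mat_adjoint G) = cnj (mtrace (G * mat_adjoint W))"
    by (rule mtrace_mult_adjoint_swap[OF G W])
  moreover have "0 \<le> Re (mtrace (C * \<rho> * mat_adjoint C))"
    by (rule psd_mat_mtrace_sandwich_nonneg[OF psd C])
  ultimately show ?thesis by simp
qed

lemma mtrace_completing_square_adjoint:
  fixes \<rho> R W G :: "complex mat"
  assumes psd: "psd_mat D \<rho>" and R: "R \<in> carrier_mat D D" "\<rho> * R = 1\<^sub>m D" "R * \<rho> = 1\<^sub>m D"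
    and W: "W \<in> carrier_mat D D" and G: "G \<in> carrier_mat D D"
  shows "0 \<le> Re (mtrace (mat_adjoint W * \<rho> * W)) + 2 * Re (mtrace (G * mat_adjoint W))
            + Re (mtrace (mat_adjoint G * R * G))"
proof -
  have Wa: "mat_adjoint W \<in> carrier_mat D D" and Ga: "mat_adjoint G \<in> carrier_mat D D"
    using W G by (auto intro: mat_adjoint_carrier)
  have "mtrace (mat_adjoint G * W) = mtrace (W * mat_adjoint G)"
    by (rule mtrace_mult_commute[OF Ga W])
  also have "\<dots> = cnj (mtrace (G * mat_adjoint W))"
    by (rule mtrace_mult_adjoint_swap[OF G W])
  finally have "Re (mtrace (mat_adjoint G * W)) = Re (mtrace (G * mat_adjoint W))" by simp
  then show ?thesis
    using mtrace_completing_square[OF psd R Wa Ga] by simp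
qed

lemma mtrace_quadratic_expand:
  fixes A B M :: "complex mat"
  assumes A: "A \<in> carrier_mat n n" and B: "B \<in> carrier_mat n n" and M: "M \<in> carrier_mat n n"
  shows "mtrace ((A + a \<cdot>\<^sub>m B) * M * (A + b \<cdot>\<^sub>m B)) = mtrace (A * M * A) + b * mtrace (A * M * B)
     + a * mtrace (B * M * A) + a * b * mtrace (B * M * B)"
proof -
  have tr3: "mtrace (P * M * Q) = (\<Sum>i<n. \<Sum>l<n. \<Sum>k<n. P $$ (i, k) * M $$ (k, l) * Q $$ (l, i))"
    if P: "P \<in> carrier_mat n n" and Q: "Q \<in> carrier_mat n n" for P Q
  proof -
    have "mtrace (P * M * Q) = (\<Sum>i<n. \<Sum>l<n. (P * M) $$ (i, l) * Q $$ (l, i))"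
      by (rule mtrace_mult[OF mult_carrier_mat[OF P M] Q])
    also have "\<dots> = (\<Sum>i<n. \<Sum>l<n. (\<Sum>k<n. P $$ (i, k) * M $$ (k, l)) * Q $$ (l, i))"
      by (intro sum.cong refl) (simp only: index_mult_mat_sum[OF P M] lessThan_iff)
    finally show ?thesis by (simp add: sum_distrib_right)
  qed
  show ?thesis
    unfolding tr3[OF A A] tr3[OF A B] tr3[OF B A] tr3[OF B B] using A B
    by (subst tr3) (auto simp: algebra_simps sum.distrib sum_distrib_left)
qed

lemma Re_mtrace_shifted_square:
  assumes \<rho>: "hermitian_mat n \<rho>" and A: "hermitian_mat n A" and B: "hermitian_mat n B"
    and c: "Re c = 0" "cnj c * c = 1"
  shows "Re (mtrace ((A + cnj c \<cdot>\<^sub>m B) * \<rho> * (A + c \<cdot>\<^sub>m B)))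
       = Re (mtrace (\<rho> * A * A)) + Re (mtrace (\<rho> * B * B)) + 2 * Im c * Im (mtrace (\<rho> * A * B))"
proof -
  note r = hermitian_matD(1)[OF \<rho>] and a = hermitian_matD(1)[OF A] and b = hermitian_matD(1)[OF B]
  have "mtrace ((A + cnj c \<cdot>\<^sub>m B) * \<rho> * (A + c \<cdot>\<^sub>m B))
      = mtrace (\<rho> * A * A) + c * cnj (mtrace (\<rho> * A * B))
        + cnj c * mtrace (\<rho> * A * B) + mtrace (\<rho> * B * B)"
    using mtrace_quadratic_expand[OF a b r] mtrace_mult_rotate[OF a r a] mtrace_mult_rotate[OF b r b]
      mtrace_mult_rotate[OF a r b] mtrace_mult_rotate[OF b r a] cnj_mtrace_hermitian_triple[OF \<rho> A B] c(2)
    by simp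
  then show ?thesis using c(1) by simp
qed

subsection \<open>The matrix S\<close>

lemma sum_atLeast1_atMost_shift: "(\<Sum>j\<in>{1..d}. f j) = (\<Sum>a<d. f (Suc a))"
  using sum.atLeast1_atMost_eq[of f d] by simp

(* With 1-based indices j in {1..d}, row j of S has its off-diagonal entry S_shift_coeff d j
   in column cyc_succ d j. *)
definition cyc_succ :: "nat \<Rightarrow> nat \<Rightarrow> nat" where
  "cyc_succ d j = (if j = d then 1 else Suc j)"

definition S_shift_coeff :: "nat \<Rightarrow> nat \<Rightarrow> complex" where
  "S_shift_coeff d j = (if j = d \<and> 4 dvd d then - \<i> else \<i>)"

lemma cyc_succ_mem: "j \<in> {1..d} \<Longrightarrow> cyc_succ d j \<in> {1..d}"
  unfolding cyc_succ_def by auto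

lemma bij_betw_cyc_succ: "bij_betw (cyc_succ d) {1..d} {1..d}"
proof -
  have inj: "inj_on (cyc_succ d) {1..d}" unfolding inj_on_def cyc_succ_def by auto
  then have "cyc_succ d ` {1..d} = {1..d}"
    using endo_inj_surj[OF _ _ inj] cyc_succ_mem by blast
  then show ?thesis using inj unfolding bij_betw_def by blast
qed

lemma S_shift_coeff_props:
  "Re (S_shift_coeff d j) = 0" "cnj (S_shift_coeff d j) * S_shift_coeff d j = 1"
  "\<bar>Im (S_shift_coeff d j)\<bar> = 1"
  unfolding S_shift_coeff_def by auto

lemma S_mat_carrier: "S_mat d \<in> carrier_mat d d"
  unfolding S_mat_def by simp

lemma S_mat_entry:
  assumes "2 \<le> d" "j \<in> {1..d}" "m \<in> {1..d}"
  shows "S_mat d $$ (j - 1, m - 1)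
    = (if m = j then 1 else if m = cyc_succ d j then S_shift_coeff d j else 0)"
  using assms unfolding S_mat_def cyc_succ_def S_shift_coeff_def by auto

lemma S_mat_row_sum:
  assumes d: "2 \<le> d" and j: "j \<in> {1..d}"
  shows "(\<Sum>m\<in>{1..d}. S_mat d $$ (j - 1, m - 1) * h m) = h j + S_shift_coeff d j * h (cyc_succ d j)"
proof -
  have "cyc_succ d j \<noteq> j" "cyc_succ d j \<in> {1..d}"
    using d j cyc_succ_mem[OF j] unfolding cyc_succ_def by auto
  then have "(\<Sum>m\<in>{1..d}. S_mat d $$ (j - 1, m - 1) * h m)
      = (\<Sum>m\<in>{1..d}. (if m = j then h m else 0) + (if m = cyc_succ d j then S_shift_coeff d j * h m else 0))"
  proof (intro sum.cong refl)
    fix m assume m: "m \<in> {1..d}"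
    show "S_mat d $$ (j - 1, m - 1) * h m
        = (if m = j then h m else 0) + (if m = cyc_succ d j then S_shift_coeff d j * h m else 0)"
      unfolding S_mat_entry[OF d j m] using \<open>cyc_succ d j \<noteq> j\<close> by auto
  qed
  also have "\<dots> = h j + S_shift_coeff d j * h (cyc_succ d j)"
    using j \<open>cyc_succ d j \<in> {1..d}\<close> by (simp add: sum.distrib)
  finally show ?thesis .
qed

(* The sign of the corner entry of S matters here: for 4 dvd d the entry i would make the
   factor vanish. *)
lemma i_power_add_i_S_shift_coeff_nonzero: "\<i> ^ d + \<i> * S_shift_coeff d d \<noteq> 0"
proof -
  have "\<i> ^ d = \<i> ^ (4 * (d div 4) + d mod 4)" by (simp only: mult_div_mod_eq)
  also have "\<dots> = (\<i> ^ 4) ^ (d div 4) * \<i> ^ (d mod 4)" by (simp only: power_add power_mult)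
  also have "\<i> ^ 4 = (1 :: complex)" by (simp add: numeral_eq_Suc)
  finally have "\<i> ^ d = \<i> ^ (d mod 4)" by simp
  moreover have "d mod 4 = 0 \<or> d mod 4 = 1 \<or> d mod 4 = 2 \<or> d mod 4 = 3" by arith
  ultimately show ?thesis
    by (elim disjE) (simp_all add: S_shift_coeff_def dvd_eq_mod_eq_0 complex_eq_iff power3_eq_cube)
qed

lemma det_S_mat_nonzero:
  assumes d: "2 \<le> d"
  shows "det (S_mat d) \<noteq> 0"
proof
  assume "det (S_mat d) = 0"
  then obtain v where v: "v \<in> carrier_vec d" "v \<noteq> 0\<^sub>v d" "S_mat d *\<^sub>v v = 0\<^sub>v d"
    using det_0_iff_vec_prod_zero[OF S_mat_carrier] by blast
  define h where "h m = v $ (m - 1)" for m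
  have row: "h j + S_shift_coeff d j * h (cyc_succ d j) = 0" if j: "j \<in> {1..d}" for j
  proof -
    have "j - 1 < d" using j by auto
    then have "0 = (S_mat d *\<^sub>v v) $ (j - 1)" using v(3) by simp
    also have "\<dots> = (\<Sum>a<d. S_mat d $$ (j - 1, a) * v $ a)"
      using \<open>j - 1 < d\<close> v(1) S_mat_carrier[of d] by (simp add: scalar_prod_def atLeast0LessThan)
    also have "\<dots> = (\<Sum>m\<in>{1..d}. S_mat d $$ (j - 1, m - 1) * h m)"
      unfolding sum_atLeast1_atMost_shift h_def by simp
    also have "\<dots> = h j + S_shift_coeff d j * h (cyc_succ d j)" by (rule S_mat_row_sum[OF d j])
    finally show ?thesis by simp
  qed
  (* The rows j < d force v_(j+1) = i v_j, so i times the last row reads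
     (i^d + i S_d1) v_1 = 0. *)
  have step: "h (Suc (Suc j)) = \<i> * h (Suc j)" if "Suc j < d" for j
  proof -
    have "h (Suc j) + \<i> * h (Suc (Suc j)) = 0"
      using row[of "Suc j"] that unfolding S_shift_coeff_def cyc_succ_def by auto
    then have "\<i> * (h (Suc j) + \<i> * h (Suc (Suc j))) = 0" by simp
    then show ?thesis by (simp add: algebra_simps)
  qed
  have pow: "h (Suc j) = \<i> ^ j * h 1" if "j < d" for j
    using that
  proof (induction j)
    case (Suc j)
    then show ?case using step[of j] by simp
  qed simp
  have hd: "h d = \<i> ^ (d - 1) * h 1" using pow[of "d - 1"] d by simp
  have "\<i> * (h d + S_shift_coeff d d * h 1) = 0" using row[of d] d by (simp add: cyc_succ_def)
  then have "(\<i> * \<i> ^ (d - 1) + \<i> * S_shift_coeff d d) * h 1 = 0"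
    unfolding hd by (simp add: algebra_simps)
  moreover have "\<i> * \<i> ^ (d - 1) = \<i> ^ d"
  proof -
    have "Suc (d - 1) = d" using d by simp
    then show ?thesis by (metis power_Suc)
  qed
  ultimately have "(\<i> ^ d + \<i> * S_shift_coeff d d) * h 1 = 0" by simp
  then have "h 1 = 0" using i_power_add_i_S_shift_coeff_nonzero by simp
  then have "v $ i = 0" if "i < d" for i
    using pow[OF that] unfolding h_def by simp
  then have "v = 0\<^sub>v d" using v(1) by (intro eq_vecI) auto
  with v(2) show False ..
qed

lemma T_mat_inverse:
  assumes "2 \<le> d"
  shows "T_mat d \<in> carrier_mat d d \<and> S_mat d * T_mat d = 1\<^sub>m d \<and> T_mat d * S_mat d = 1\<^sub>m d"
proof -
  have "S_mat d \<in> Units (ring_mat TYPE(complex) d undefined)"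
    by (rule det_non_zero_imp_unit[OF S_mat_carrier det_S_mat_nonzero[OF assms]])
  then obtain B where "B \<in> carrier_mat d d" "S_mat d * B = 1\<^sub>m d" "B * S_mat d = 1\<^sub>m d"
    unfolding Units_def ring_mat_def by auto
  then show ?thesis unfolding T_mat_def by (rule minv_inverse[OF S_mat_carrier])
qed

lemma T_S_sum:
  assumes d: "2 \<le> d" and k: "k \<in> {1..d}" and m: "m \<in> {1..d}"
  shows "(\<Sum>j\<in>{1..d}. T_mat d $$ (k - 1, j - 1) * S_mat d $$ (j - 1, m - 1)) = (if k = m then 1 else 0)"
proof -
  have T: "T_mat d \<in> carrier_mat d d" and TS: "T_mat d * S_mat d = 1\<^sub>m d"
    using T_mat_inverse[OF d] by auto
  have "(\<Sum>j\<in>{1..d}. T_mat d $$ (k - 1, j - 1) * S_mat d $$ (j - 1, m - 1))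
      = (\<Sum>a<d. T_mat d $$ (k - 1, a) * S_mat d $$ (a, m - 1))"
    unfolding sum_atLeast1_atMost_shift by simp
  also have "\<dots> = (T_mat d * S_mat d) $$ (k - 1, m - 1)"
    using k m by (subst index_mult_mat_sum[OF T S_mat_carrier]) auto
  also have "\<dots> = (if k = m then 1 else 0)" unfolding TS using k m by auto
  finally show ?thesis .
qed

lemma sum_S_T_contract:
  assumes d: "2 \<le> d"
  shows "(\<Sum>j\<in>{1..d}. \<Sum>m\<in>{1..d}. S_mat d $$ (j - 1, m - 1) * (\<Sum>k\<in>{1..d}. T_mat d $$ (k - 1, j - 1) * F m k))
    = (\<Sum>m\<in>{1..d}. F m m)"
proof -
  let ?T = "\<lambda>k j. T_mat d $$ (k - 1, j - 1)" and ?S = "\<lambda>j m. S_mat d $$ (j - 1, m - 1)"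
  have "(\<Sum>j\<in>{1..d}. \<Sum>m\<in>{1..d}. ?S j m * (\<Sum>k\<in>{1..d}. ?T k j * F m k))
      = (\<Sum>j\<in>{1..d}. \<Sum>m\<in>{1..d}. \<Sum>k\<in>{1..d}. ?T k j * ?S j m * F m k)"
    by (simp add: sum_distrib_left mult_ac)
  also have "\<dots> = (\<Sum>m\<in>{1..d}. \<Sum>k\<in>{1..d}. (\<Sum>j\<in>{1..d}. ?T k j * ?S j m) * F m k)"
    by (subst sum.swap, rule sum.cong[OF refl], subst sum.swap) (simp add: sum_distrib_right)
  also have "\<dots> = (\<Sum>m\<in>{1..d}. \<Sum>k\<in>{1..d}. if k = m then F m k else 0)"
  proof (intro sum.cong refl)
    fix m k assume "m \<in> {1..d}" "k \<in> {1..d}"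
    then show "(\<Sum>j\<in>{1..d}. ?T k j * ?S j m) * F m k = (if k = m then F m k else 0)"
      unfolding T_S_sum[OF d \<open>k \<in> {1..d}\<close> \<open>m \<in> {1..d}\<close>] by simp
  qed
  also have "\<dots> = (\<Sum>m\<in>{1..d}. F m m)" by simp
  finally show ?thesis .
qed

lemma Gamma_carrier: "Gamma D d rho0 drho z xi j \<in> carrier_mat D D"
  unfolding Gamma_def by simp

lemma mtrace_Gamma_mult:
  assumes rho: "\<forall>l\<in>{0..d}. rho_l rho0 drho l \<in> carrier_mat D D \<and>
      mtrace (rho_l rho0 drho l * Y) = (if l = m then 1 else 0)"
    and xi: "\<forall>k\<in>{1..d}. xi k \<in> carrier_mat D D" and Y: "Y \<in> carrier_mat D D" and m: "m \<le> d"
  shows "mtrace (Gamma D d rho0 drho z xi j * Y)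
    = (\<Sum>k\<in>{1..d}. T_mat d $$ (k - 1, j - 1) * (of_real (z m k) + \<i> * mtrace (xi k * Y)))"
proof -
  let ?T = "\<lambda>k. T_mat d $$ (k - 1, j - 1)" and ?r = "rho_l rho0 drho"
  define tr where "tr M = (\<Sum>a<D. \<Sum>b<D. M a b * Y $$ (b, a))" for M :: "nat \<Rightarrow> nat \<Rightarrow> complex"
  have tr_mtrace: "mtrace (M * Y) = tr (\<lambda>a b. M $$ (a, b))" if "M \<in> carrier_mat D D" for M
    unfolding tr_def by (rule mtrace_mult[OF that Y])
  have tr_sum: "tr (\<lambda>a b. \<Sum>k\<in>K. f k a b) = (\<Sum>k\<in>K. tr (f k))" for K and f :: "nat \<Rightarrow> nat \<Rightarrow> nat \<Rightarrow> complex"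
  proof -
    have "tr (\<lambda>a b. \<Sum>k\<in>K. f k a b) = (\<Sum>a<D. \<Sum>b<D. \<Sum>k\<in>K. f k a b * Y $$ (b, a))"
      unfolding tr_def by (simp add: sum_distrib_right)
    also have "\<dots> = (\<Sum>a<D. \<Sum>k\<in>K. \<Sum>b<D. f k a b * Y $$ (b, a))"
      by (rule sum.cong[OF refl], rule sum.swap)
    also have "\<dots> = (\<Sum>k\<in>K. tr (f k))"
      unfolding tr_def by (rule sum.swap)
    finally show ?thesis .
  qed
  have tr_lin: "tr (\<lambda>a b. p * f a b + q * g a b) = p * tr f + q * tr g" for p q f g
    unfolding tr_def by (simp add: algebra_simps sum.distrib sum_distrib_left)
  have "mtrace (Gamma D d rho0 drho z xi j * Y)
      = tr (\<lambda>a b. \<Sum>k\<in>{1..d}. ?T k * (\<Sum>l\<in>{0..d}. of_real (z l k) * ?r l $$ (a, b)) + (?T k * \<i>) * xi k $$ (a, b))"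
    unfolding tr_mtrace[OF Gamma_carrier] unfolding tr_def
    by (intro sum.cong refl) (simp add: Gamma_def algebra_simps)
  also have "\<dots> = (\<Sum>k\<in>{1..d}. ?T k * (\<Sum>l\<in>{0..d}. of_real (z l k) * tr (\<lambda>a b. ?r l $$ (a, b)))
      + (?T k * \<i>) * tr (\<lambda>a b. xi k $$ (a, b)))"
    unfolding tr_sum tr_lin tr_sum[where f = "\<lambda>l a b. of_real (z l _) * ?r l $$ (a, b)"]
    by (simp add: tr_def sum_distrib_left mult.assoc)
  also have "\<dots> = (\<Sum>k\<in>{1..d}. ?T k * (of_real (z m k) + \<i> * mtrace (xi k * Y)))"
  proof (rule sum.cong[OF refl])
    fix k assume k: "k \<in> {1..d}"
    have "(\<Sum>l\<in>{0..d}. of_real (z l k) * tr (\<lambda>a b. ?r l $$ (a, b))) = (\<Sum>l\<in>{0..d}. if l = m then of_real (z l k) else 0)"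
      using rho by (intro sum.cong refl) (simp add: tr_mtrace[symmetric])
    also have "\<dots> = of_real (z m k)" using m by simp
    finally show "?T k * (\<Sum>l\<in>{0..d}. of_real (z l k) * tr (\<lambda>a b. ?r l $$ (a, b)))
        + (?T k * \<i>) * tr (\<lambda>a b. xi k $$ (a, b)) = ?T k * (of_real (z m k) + \<i> * mtrace (xi k * Y))"
      using tr_mtrace[of "xi k"] xi k by (simp add: algebra_simps)
  qed
  finally show ?thesis .
qed

lemma holevo_feasibleD:
  assumes "holevo_feasible D d rho0 drho X" "j \<in> {1..d}"
  shows "hermitian_mat D (X j)" "X j \<in> carrier_mat D D" "mtrace (rho0 * X j) = 0"
    "\<forall>k\<in>{1..d}. mtrace (drho k * X j) = (if k = j then 1 else 0)"
  using assms unfolding holevo_feasible_def hermitian_mat_def by auto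

lemma sum_Re_mtrace_Gamma_shift:
  assumes d: "2 \<le> d" and rho: "rho0 \<in> carrier_mat D D" and drho: "\<forall>l\<in>{1..d}. drho l \<in> carrier_mat D D"
    and xi: "\<forall>k\<in>{1..d}. hermitian_mat D (xi k)" and feas: "holevo_feasible D d rho0 drho X"
  shows "(\<Sum>j\<in>{1..d}. Re (mtrace (Gamma D d rho0 drho z xi j *
      (X j + S_shift_coeff d j \<cdot>\<^sub>m X (cyc_succ d j))))) = (\<Sum>j\<in>{1..d}. z j j)"
proof -
  let ?G = "Gamma D d rho0 drho z xi"
  let ?T = "\<lambda>k j. T_mat d $$ (k - 1, j - 1)" and ?S = "\<lambda>j m. S_mat d $$ (j - 1, m - 1)"
  define F where "F m k = of_real (z m k) + \<i> * mtrace (xi k * X m)" for m k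
  note X = holevo_feasibleD[OF feas]
  have xic: "\<forall>k\<in>{1..d}. xi k \<in> carrier_mat D D" using xi unfolding hermitian_mat_def by auto
  have GX: "mtrace (?G j * X m) = (\<Sum>k\<in>{1..d}. ?T k j * F m k)" if m: "m \<in> {1..d}" for j m
    unfolding F_def
    by (rule mtrace_Gamma_mult[OF _ xic X(2)[OF m]]) (use rho drho X(3,4)[OF m] m in \<open>auto simp: rho_l_def\<close>)
  have row: "mtrace (?G j * (X j + S_shift_coeff d j \<cdot>\<^sub>m X (cyc_succ d j)))
      = (\<Sum>m\<in>{1..d}. ?S j m * (\<Sum>k\<in>{1..d}. ?T k j * F m k))" if j: "j \<in> {1..d}" for j
  proof -
    have j': "cyc_succ d j \<in> {1..d}" by (rule cyc_succ_mem[OF j])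
    have "mtrace (?G j * (X j + S_shift_coeff d j \<cdot>\<^sub>m X (cyc_succ d j)))
        = mtrace (?G j * X j) + S_shift_coeff d j * mtrace (?G j * X (cyc_succ d j))"
      using X(2)[OF j] X(2)[OF j'] Gamma_carrier[of D d rho0 drho z xi j]
      by (simp add: mult_add_distrib_mat[of _ D D] mult_smult_distrib[of _ D D _ D]
          mtrace_add[of _ D] mtrace_smult[of _ D] mult_carrier_mat[of _ D D _ D])
    also have "\<dots> = (\<Sum>m\<in>{1..d}. ?S j m * mtrace (?G j * X m))"
      by (rule S_mat_row_sum[OF d j, symmetric])
    finally show ?thesis using GX by simp
  qed
  have "(\<Sum>j\<in>{1..d}. mtrace (?G j * (X j + S_shift_coeff d j \<cdot>\<^sub>m X (cyc_succ d j))))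
      = (\<Sum>j\<in>{1..d}. \<Sum>m\<in>{1..d}. ?S j m * (\<Sum>k\<in>{1..d}. ?T k j * F m k))"
    by (rule sum.cong[OF refl row])
  also have "\<dots> = (\<Sum>m\<in>{1..d}. F m m)" by (rule sum_S_T_contract[OF d])
  finally have "(\<Sum>j\<in>{1..d}. Re (mtrace (?G j * (X j + S_shift_coeff d j \<cdot>\<^sub>m X (cyc_succ d j)))))
      = (\<Sum>m\<in>{1..d}. Re (F m m))"
    by (simp flip: Re_sum)
  also have "\<dots> = (\<Sum>m\<in>{1..d}. z m m)"
  proof (intro sum.cong refl)
    fix m assume m: "m \<in> {1..d}"
    show "Re (F m m) = z m m"
      using Im_mtrace_hermitian_mult[OF xi[rule_format, OF m] X(1)[OF m]] unfolding F_def by simp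
  qed
  finally show ?thesis .
qed

lemma holevo_objective_ge_shift_sum:
  assumes \<tau>: "\<forall>j\<in>{1..d}. \<bar>\<tau> j\<bar> = 1"
  shows "(\<Sum>j\<in>{1..d}. Re (mtrace (rho0 * X j * X j)))
       + (\<Sum>j\<in>{1..d}. \<tau> j * Im (mtrace (rho0 * X j * X (cyc_succ d j))))
       \<le> holevo_objective d rho0 X"
proof -
  let ?Z = "Z_mat d rho0 X"
  define p where "p a = cyc_succ d (Suc a) - 1" for a
  define t where "t a = \<tau> (Suc a)" for a
  have Z: "?Z $$ (a, b) = mtrace (rho0 * X (Suc a) * X (Suc b))" if "a < d" "b < d" for a b
    using that unfolding Z_mat_def by simp
  have J: "Im_mat ?Z \<in> carrier_mat d d" unfolding Im_mat_def Z_mat_def by simp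
  have p: "p a < d" "Suc (p a) = cyc_succ d (Suc a)" if "a < d" for a
    using that unfolding p_def cyc_succ_def by auto
  then have p_less: "\<forall>a<d. p a < d" by blast
  have "inj_on p {..<d}" unfolding inj_on_def p_def cyc_succ_def by auto
  then have "bij_betw p {..<d} {..<d}"
    using endo_inj_surj[of "{..<d}" p] p(1) unfolding bij_betw_def by auto
  then have U: "unitary_mat d (signed_perm_mat d p t)"
    using \<tau> by (intro signed_perm_mat_unitary) (auto simp: t_def)
  have "Re (mtrace (Re_mat ?Z)) = (\<Sum>a<d. Re (?Z $$ (a, a)))"
    unfolding mtrace_def Re_mat_def Z_mat_def Re_sum by simp
  also have "\<dots> = (\<Sum>j\<in>{1..d}. Re (mtrace (rho0 * X j * X j)))"
    unfolding sum_atLeast1_atMost_shift by (intro sum.cong refl) (simp add: Z)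
  finally have diag: "Re (mtrace (Re_mat ?Z)) = (\<Sum>j\<in>{1..d}. Re (mtrace (rho0 * X j * X j)))" .
  have "Re (mtrace (Im_mat ?Z * signed_perm_mat d p t))
      = (\<Sum>j\<in>{1..d}. \<tau> j * Im (mtrace (rho0 * X j * X (cyc_succ d j))))"
    unfolding mtrace_mult_signed_perm_mat[OF J p_less] sum_atLeast1_atMost_shift Re_sum
    using p by (intro sum.cong refl) (simp_all add: Im_mat_def Z_mat_def t_def)
  moreover have "Re (mtrace (Im_mat ?Z * signed_perm_mat d p t)) \<le> trace_norm (Im_mat ?Z)"
    by (rule Re_mtrace_mult_unitary_le_trace_norm[OF J U])
  ultimately show ?thesis using diag unfolding holevo_objective_def by simp
qed

lemma Gamma_term_lower_bound:
  fixes \<rho> R A B G :: "complex mat"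
  assumes psd: "psd_mat D \<rho>" and R: "R \<in> carrier_mat D D" "\<rho> * R = 1\<^sub>m D" "R * \<rho> = 1\<^sub>m D"
    and A: "hermitian_mat D A" and B: "hermitian_mat D B" and G: "G \<in> carrier_mat D D"
    and c: "Re c = 0" "cnj c * c = 1"
  shows "0 \<le> Re (mtrace (\<rho> * A * A)) + Re (mtrace (\<rho> * B * B))
      + 2 * (if \<not> b then Im c else - Im c) * Im (mtrace (\<rho> * A * B))
      + 2 * Re (mtrace (G * (A + c \<cdot>\<^sub>m B)))
      + (if \<not> b then Re (mtrace (G * R * mat_adjoint G)) else Re (mtrace (mat_adjoint G * R * G)))"
proof -
  note A' = hermitian_matD[OF A] and B' = hermitian_matD[OF B]
  have \<rho>: "hermitian_mat D \<rho>" using psd unfolding psd_mat_def by simp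
  define W where "W = A + cnj c \<cdot>\<^sub>m B"
  have W: "W \<in> carrier_mat D D" unfolding W_def using A' B' by simp
  have Wa: "mat_adjoint W = A + c \<cdot>\<^sub>m B"
    unfolding W_def using A' B' by (simp add: mat_adjoint_add[of _ D D] mat_adjoint_smult)
  show ?thesis
  proof (cases b)
    case False
    then show ?thesis
      using mtrace_completing_square[OF psd R W G] Re_mtrace_shifted_square[OF \<rho> A B c]
      unfolding Wa unfolding W_def by simp
  next
    case True
    have c': "Re (cnj c) = 0" "cnj (cnj c) * cnj c = 1" using c by (simp_all add: mult.commute)
    show ?thesis
      using True mtrace_completing_square_adjoint[OF psd R W G] Re_mtrace_shifted_square[OF \<rho> A B c']
      unfolding Wa unfolding W_def by simp
  qed
qed

lemma g_alpha_le_holevo_objective: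
  assumes d: "2 \<le> d" and psd: "psd_mat D rho0" and inv: "invertible_mat rho0"
    and drho: "\<forall>l\<in>{1..d}. drho l \<in> carrier_mat D D" and xi: "\<forall>k\<in>{1..d}. hermitian_mat D (xi k)"
    and feas: "holevo_feasible D d rho0 drho X"
  shows "g_alpha D d rho0 drho \<alpha> z xi \<le> holevo_objective d rho0 X"
proof -
  let ?G = "Gamma D d rho0 drho z xi" and ?R = "minv rho0" and ?c = "S_shift_coeff d"
    and ?\<sigma> = "cyc_succ d" and ?b = "alpha_bar d \<alpha>" and ?Z = "\<lambda>j k. mtrace (rho0 * X j * X k)"
  define \<tau> where "\<tau> j = (if \<not> ?b j then Im (?c j) else - Im (?c j))" for j
  define Q where "Q j = (if \<not> ?b j then Re (mtrace (?G j * ?R * mat_adjoint (?G j)))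
      else Re (mtrace (mat_adjoint (?G j) * ?R * ?G j)))" for j
  define L where "L j = Re (mtrace (?G j * (X j + ?c j \<cdot>\<^sub>m X (?\<sigma> j))))" for j
  have rho: "rho0 \<in> carrier_mat D D" using psd unfolding psd_mat_def hermitian_mat_def by simp
  have R: "?R \<in> carrier_mat D D" "rho0 * ?R = 1\<^sub>m D" "?R * rho0 = 1\<^sub>m D"
    using minv_invertible_mat[OF rho inv] by auto
  note X = holevo_feasibleD(1)[OF feas]
  have "0 \<le> Re (?Z j j) + Re (?Z (?\<sigma> j) (?\<sigma> j)) + 2 * \<tau> j * Im (?Z j (?\<sigma> j)) + 2 * L j + Q j"
    if j: "j \<in> {1..d}" for j
    unfolding \<tau>_def Q_def L_def
    by (rule Gamma_term_lower_bound[OF psd R X[OF j] X[OF cyc_succ_mem[OF j]] Gamma_carrier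
          S_shift_coeff_props(1,2)])
  then have "0 \<le> (\<Sum>j\<in>{1..d}. Re (?Z j j) + Re (?Z (?\<sigma> j) (?\<sigma> j))
      + 2 * \<tau> j * Im (?Z j (?\<sigma> j)) + 2 * L j + Q j)"
    by (intro sum_nonneg)
  also have "\<dots> = (\<Sum>j\<in>{1..d}. Re (?Z j j)) + (\<Sum>j\<in>{1..d}. Re (?Z (?\<sigma> j) (?\<sigma> j)))
      + 2 * (\<Sum>j\<in>{1..d}. \<tau> j * Im (?Z j (?\<sigma> j))) + 2 * (\<Sum>j\<in>{1..d}. L j) + (\<Sum>j\<in>{1..d}. Q j)"
    by (simp add: sum.distrib sum_distrib_left mult.assoc)
  finally have "0 \<le> \<dots>" .
  moreover have "(\<Sum>j\<in>{1..d}. Re (?Z (?\<sigma> j) (?\<sigma> j))) = (\<Sum>j\<in>{1..d}. Re (?Z j j))"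
    by (rule sum.reindex_bij_betw[OF bij_betw_cyc_succ])
  moreover have "(\<Sum>j\<in>{1..d}. L j) = (\<Sum>j\<in>{1..d}. z j j)"
    unfolding L_def by (rule sum_Re_mtrace_Gamma_shift[OF d rho drho xi feas])
  moreover have "(\<Sum>j\<in>{1..d}. Re (?Z j j)) + (\<Sum>j\<in>{1..d}. \<tau> j * Im (?Z j (?\<sigma> j)))
      \<le> holevo_objective d rho0 X"
    by (rule holevo_objective_ge_shift_sum) (simp add: \<tau>_def S_shift_coeff_props(3))
  moreover have "g_alpha D d rho0 drho \<alpha> z xi = - (\<Sum>j\<in>{1..d}. z j j) - (\<Sum>j\<in>{1..d}. Q j) / 2"
    unfolding g_alpha_def Q_def Let_def by (simp add: sum_divide_distrib)
  ultimately show ?thesis by linarith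
qed

theorem theorem2:
  fixes D d :: nat
    and rho :: "(nat \<Rightarrow> real) \<Rightarrow> complex mat"
    and \<theta>0 :: "nat \<Rightarrow> real"
    and drho :: "nat \<Rightarrow> complex mat"
  assumes d3: "d \<ge> 3"
    and family: "\<exists>\<epsilon>>0. \<forall>\<theta>. (\<forall>j\<in>{1..d}. \<bar>\<theta> j - \<theta>0 j\<bar> < \<epsilon>) \<longrightarrow> density_mat D (rho \<theta>)"
    and full_rank: "invertible_mat (rho \<theta>0)"
    and drho_carrier: "\<forall>j\<in>{1..d}. drho j \<in> carrier_mat D D"
    and drho_deriv: "\<forall>j\<in>{1..d}. \<forall>a<D. \<forall>b<D.
           ((\<lambda>t::real. rho (\<theta>0(j := \<theta>0 j + t)) $$ (a, b)) has_vector_derivative (drho j $$ (a, b))) (at 0)"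
  shows "(SUP \<alpha>. SUP z. SUP xi \<in> {xi. \<forall>k\<in>{1..d}. hermitian_mat D (xi k)}.
            ereal (g_alpha D d (rho \<theta>0) drho \<alpha> z xi))
         \<le> holevo_CR D d (rho \<theta>0) drho"
proof -
  \<comment> \<open>Only the data at \<open>\<theta>0\<close> enter.\<close>
  have "density_mat D (rho \<theta>0)" using family by force
  then have psd: "psd_mat D (rho \<theta>0)" unfolding density_mat_def by simp
  show ?thesis
    unfolding holevo_CR_def
  proof (intro SUP_least INF_greatest)
    fix \<alpha> z xi X
    assume "xi \<in> {xi. \<forall>k\<in>{1..d}. hermitian_mat D (xi k)}" "X \<in> {X. holevo_feasible D d (rho \<theta>0) drho X}"
    then show "ereal (g_alpha D d (rho \<theta>0) drho \<alpha> z xi) \<le> ereal (holevo_objective d (rho \<theta>0) X)"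
      using g_alpha_le_holevo_objective[OF _ psd full_rank drho_carrier] d3 by simp
  qed
qed

end
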